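(* Let $w_1,w_2\ge2$ be even. Then $E_{w_1,w_2}^{\mathbb Q}\subset W_{w_1,w_2}^{\mathbb Q}$, the map $\Phi_S:W_{w_1,w_2}^{\mathbb Q}\to (W_{w_1}^{\mathbb Q}/E_{w_1}^{\mathbb Q})\otimes(W_{w_2}^{\mathbb Q}/E_{w_2}^{\mathbb Q})$, $P\mapsto$ the class of $[(1,1)+(S,S)].P$, is well defined (i.e. $[(1,1)+(S,S)].P\in W_{w_1}^{\mathbb Q}\otimes W_{w_2}^{\mathbb Q}$ for $P\in W_{w_1,w_2}^{\mathbb Q}$), and its kernel is exactly $E_{w_1,w_2}^{\mathbb Q}$. That is, the sequence $0\to E_{w_1,w_2}^{\mathbb Q}\to W_{w_1,w_2}^{\mathbb Q}\xrightarrow{\Phi_S}(W_{w_1}^{\mathbb Q}/E_{w_1}^{\mathbb Q})\otimes(W_{w_2}^{\mathbb Q}/E_{w_2}^{\mathbb Q})$ is exact.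
   Context: $\Gamma=PSL_2(\mathbb Z)$, $S=\pm\begin{pmatrix}0&-1\\1&0\end{pmatrix}$, $U=\pm\begin{pmatrix}0&1\\-1&1\end{pmatrix}$. For even $w$, $V_w^{\mathbb Q}$ = rational polynomials in $X$ of degree $\le w$ with action $\gamma.P(X)=(-cX+a)^wP\big(\frac{dX-b}{-cX+a}\big)$ for $\gamma=\pm\begin{pmatrix}a&b\\c&d\end{pmatrix}$; $\mathcal I_1=\langle1+S,1+U+U^2\rangle\subset\mathbb Z[\Gamma]$ (left ideal); $W_w^{\mathbb Q}=\{P\in V_w^{\mathbb Q}:g.P=0\ \forall g\in\mathcal I_1\}$; $E_w^{\mathbb Q}=\mathbb Q(1-X^w)$. $V_{w_1,w_2}^{\mathbb Q}=V_{w_1}^{\mathbb Q}\otimes V_{w_2}^{\mathbb Q}$ (polynomials in $X_1,X_2$) with the diagonal $\Gamma^2$-action $(\gamma_1,\gamma_2).P(X_1,X_2)=(-c_1X_1+a_1)^{w_1}(-c_2X_2+a_2)^{w_2}P\big(\frac{d_1X_1-b_1}{-c_1X_1+a_1},\frac{d_2X_2-b_2}{-c_2X_2+a_2}\big)$. Identify $\mathbb Z[\Gamma^2]=\mathbb Z[\Gamma]\otimes\mathbb Z[\Gamma]$ writing $(a,b)=a\otimes b$. $\mathcal I_2$ is the left ideal generated by $(1+S,1+S)$, $(S,S)+(S,US)+(US,US)+(1,U)-(U^2,U^2)$, $(1+U+U^2,1)[(1,1)+(S,S)]$, $(1,1+U+U^2)[(1,1)+(S,S)]$; $W_{w_1,w_2}^{\mathbb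 Q}=\{P:g.P=0\ \forall g\in\mathcal I_2\}$. $V_{w_1,w_2}^{\mathbb Q}[I_D]=\{P:[(1,1)+(S,S)].P=[(1,1)+(U,U)+(U^2,U^2)].P=0\}$ and $E_{w_1,w_2}^{\mathbb Q}=(W_{w_1}^{\mathbb Q}\otimes1)+V_{w_1,w_2}^{\mathbb Q}[I_D]+(X_1^{w_1}\otimes W_{w_2}^{\mathbb Q})$, where $W_{w_1}^{\mathbb Q}\otimes1=\{P(X_1):P\in W_{w_1}^{\mathbb Q}\}$ and $X_1^{w_1}\otimes W_{w_2}^{\mathbb Q}=\{X_1^{w_1}Q(X_2):Q\in W_{w_2}^{\mathbb Q}\}$. *)

theory Defs
  imports "HOL-Computational_Algebra.Polynomial"
begin

text \<open>An integer 2x2 matrix (a,b,c,d) stands for ((a,b),(c,d)). Elements of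
  PSL_2(Z) are represented by matrices of determinant 1; since all weights are
  even, the sign ambiguity does not affect any action used below.\<close>

type_synonym mat2 = "int \<times> int \<times> int \<times> int"

definition SL2 :: "mat2 set" where
  "SL2 = {(a,b,c,d). a*d - b*c = 1}"

fun mmul :: "mat2 \<Rightarrow> mat2 \<Rightarrow> mat2" where
  "mmul (a,b,c,d) (a',b',c',d') = (a*a' + b*c', a*b' + b*d', c*a' + d*c', c*b' + d*d')"

definition mI :: mat2 where "mI = (1,0,0,1)"
definition mS :: mat2 where "mS = (0,-1,1,0)"
definition mU :: mat2 where "mU = (0,1,-1,1)"

fun img :: "nat \<Rightarrow> mat2 \<Rightarrow> nat \<Rightarrow> rat poly" where
  "img w (a,b,c,d) i = [:of_int (-b), of_int d:] ^ i * [:of_int a, of_int (-c):] ^ (w - i)"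

definition act1 :: "nat \<Rightarrow> mat2 \<Rightarrow> rat poly \<Rightarrow> rat poly" where
  "act1 w g P = (\<Sum>i\<le>w. smult (coeff P i) (img w g i))"

definition inV1 :: "nat \<Rightarrow> rat poly \<Rightarrow> bool" where
  "inV1 w P \<longleftrightarrow> degree P \<le> w"

type_synonym zg = "(int \<times> mat2) list"

definition zg_ok :: "zg \<Rightarrow> bool" where
  "zg_ok x \<longleftrightarrow> (\<forall>(n,g)\<in>set x. g \<in> SL2)"

definition zg_mult :: "zg \<Rightarrow> zg \<Rightarrow> zg" where
  "zg_mult x y = concat (map (\<lambda>(m,g). map (\<lambda>(n,h). (m*n, mmul g h)) y) x)"

definition zg_act :: "nat \<Rightarrow> zg \<Rightarrow> rat poly \<Rightarrow> rat poly" where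
  "zg_act w x P = sum_list (map (\<lambda>(n,g). smult (of_int n) (act1 w g P)) x)"

definition lideal1 :: "zg list \<Rightarrow> zg set" where
  "lideal1 gens = {concat (map2 zg_mult xs gens) | xs. length xs = length gens \<and> (\<forall>x\<in>set xs. zg_ok x)}"

definition I1 :: "zg set" where
  "I1 = lideal1 [[(1,mI),(1,mS)], [(1,mI),(1,mU),(1,mmul mU mU)]]"

definition W1 :: "nat \<Rightarrow> rat poly set" where
  "W1 w = {P. inV1 w P \<and> (\<forall>g\<in>I1. zg_act w g P = 0)}"

definition E1 :: "nat \<Rightarrow> rat poly set" where
  "E1 w = {smult c (1 - monom 1 w) | c. True}"

section \<open>Two variables: V_{w1,w2} as rat poly poly (outer variable X1, inner X2)\<close>

definition tens :: "rat poly \<Rightarrow> rat poly \<Rightarrow> rat poly poly" where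
  "tens f g = map_poly (\<lambda>c. smult c g) f"

definition inV2 :: "nat \<Rightarrow> nat \<Rightarrow> rat poly poly \<Rightarrow> bool" where
  "inV2 w1 w2 P \<longleftrightarrow> degree P \<le> w1 \<and> (\<forall>i. degree (coeff P i) \<le> w2)"

definition act2 :: "nat \<Rightarrow> nat \<Rightarrow> mat2 \<times> mat2 \<Rightarrow> rat poly poly \<Rightarrow> rat poly poly" where
  "act2 w1 w2 gh P = (\<Sum>i\<le>w1. \<Sum>j\<le>w2.
      smult [:coeff (coeff P i) j:] (tens (img w1 (fst gh) i) (img w2 (snd gh) j)))"

type_synonym zg2 = "(int \<times> mat2 \<times> mat2) list"

definition zg2_ok :: "zg2 \<Rightarrow> bool" where
  "zg2_ok x \<longleftrightarrow> (\<forall>(n,g,h)\<in>set x. g \<in> SL2 \<and> h \<in> SL2)"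

definition zg2_mult :: "zg2 \<Rightarrow> zg2 \<Rightarrow> zg2" where
  "zg2_mult x y = concat (map (\<lambda>(m,g,g'). map (\<lambda>(n,h,h'). (m*n, mmul g h, mmul g' h')) y) x)"

text \<open>The identification Z[Gamma^2] = Z[Gamma] (x) Z[Gamma], (a,b) = a (x) b.\<close>
definition zg_tens :: "zg \<Rightarrow> zg \<Rightarrow> zg2" where
  "zg_tens x y = concat (map (\<lambda>(m,g). map (\<lambda>(n,h). (m*n, g, h)) y) x)"

definition zg2_act :: "nat \<Rightarrow> nat \<Rightarrow> zg2 \<Rightarrow> rat poly poly \<Rightarrow> rat poly poly" where
  "zg2_act w1 w2 x P = sum_list (map (\<lambda>(n,g,h). smult [:of_int n:] (act2 w1 w2 (g,h) P)) x)"

definition lideal2 :: "zg2 list \<Rightarrow> zg2 set" where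
  "lideal2 gens = {concat (map2 zg2_mult xs gens) | xs. length xs = length gens \<and> (\<forall>x\<in>set xs. zg2_ok x)}"

definition DS :: zg2 where "DS = [(1,mI,mI),(1,mS,mS)]"
definition DU :: zg2 where "DU = [(1,mI,mI),(1,mU,mU),(1,mmul mU mU,mmul mU mU)]"

definition I2 :: "zg2 set" where
  "I2 = lideal2
    [ zg_tens [(1,mI),(1,mS)] [(1,mI),(1,mS)],
      [(1,mS,mS),(1,mS,mmul mU mS),(1,mmul mU mS,mmul mU mS),(1,mI,mU),(-1,mmul mU mU,mmul mU mU)],
      zg2_mult (zg_tens [(1,mI),(1,mU),(1,mmul mU mU)] [(1,mI)]) DS,
      zg2_mult (zg_tens [(1,mI)] [(1,mI),(1,mU),(1,mmul mU mU)]) DS ]"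

definition W2 :: "nat \<Rightarrow> nat \<Rightarrow> rat poly poly set" where
  "W2 w1 w2 = {P. inV2 w1 w2 P \<and> (\<forall>g\<in>I2. zg2_act w1 w2 g P = 0)}"

definition VID :: "nat \<Rightarrow> nat \<Rightarrow> rat poly poly set" where
  "VID w1 w2 = {P. inV2 w1 w2 P \<and> zg2_act w1 w2 DS P = 0 \<and> zg2_act w1 w2 DU P = 0}"

definition E2 :: "nat \<Rightarrow> nat \<Rightarrow> rat poly poly set" where
  "E2 w1 w2 = {map_poly (\<lambda>c. [:c:]) P + Q + monom R w1 | P Q R.
       P \<in> W1 w1 \<and> Q \<in> VID w1 w2 \<and> R \<in> W1 w2}"

text \<open>A (x) B inside V_{w1,w2}: the span of the pure tensors f(X1) g(X2), f in A, g in B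
  (A, B are subspaces, so finite sums of pure tensors suffice).\<close>
definition tspan :: "rat poly set \<Rightarrow> rat poly set \<Rightarrow> rat poly poly set" where
  "tspan A B = {sum_list (map (\<lambda>(f,g). tens f g) l) | l. set l \<subseteq> A \<times> B}"

text \<open>Kernel of the natural map W_{w1} (x) W_{w2} -> (W_{w1}/E_{w1}) (x) (W_{w2}/E_{w2}),
  namely E_{w1} (x) W_{w2} + W_{w1} (x) E_{w2}.\<close>
definition Kq :: "nat \<Rightarrow> nat \<Rightarrow> rat poly poly set" where
  "Kq w1 w2 = {x + y | x y. x \<in> tspan (E1 w1) (W1 w2) \<and> y \<in> tspan (W1 w1) (E1 w2)}"

end

theory Submission
  imports Defs
begin

text \<open>
  Writing a polynomial of degree at most \<open>w\<close> through its homogenisation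
  \<open>y\<^sup>w P(x/y)\<close>, the action of \<open>(a,b,c,d)\<close> becomes the substitution
  \<open>(x,y) \<mapsto> (dx - by, ay - cx)\<close>; hence it is a left action, \<open>-I\<close> acts trivially
  in even weight, and the two-variable action is the action on the \<open>X\<^sub>1\<close>-rows
  composed with the action on the \<open>X\<^sub>2\<close>-coefficients.

  For \<open>P \<in> W\<^sub>w\<^sub>1\<^sub>,\<^sub>w\<^sub>2\<close> put \<open>R = (1 + (S,S)).P\<close>. The generator \<open>(1+S,1+S)\<close> gives
  \<open>(1,S)R = (S,1)R = -R\<close> and the two generators built from \<open>1+U+U\<^sup>2\<close> give the
  \<open>U\<close>-relations, so every \<open>X\<^sub>2\<close>-coefficient of \<open>R\<close> lies in \<open>W\<^sub>w\<^sub>2\<close> and every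
  \<open>X\<^sub>1\<close>-row in \<open>W\<^sub>w\<^sub>1\<close>. Applying a linear retraction of \<open>V\<^sub>w\<^sub>2\<close> onto \<open>W\<^sub>w\<^sub>2\<close> in
  the variable \<open>X\<^sub>2\<close> exhibits \<open>R\<close> as an element of \<open>W\<^sub>w\<^sub>1 \<otimes> W\<^sub>w\<^sub>2\<close>.

  Since \<open>E\<^sub>w\<close> is the line through \<open>1 - X\<^sup>w\<close>, the kernel of
  \<open>W\<^sub>w\<^sub>1 \<otimes> W\<^sub>w\<^sub>2 \<rightarrow> (W\<^sub>w\<^sub>1/E\<^sub>w\<^sub>1) \<otimes> (W\<^sub>w\<^sub>2/E\<^sub>w\<^sub>2)\<close> consists of the
  \<open>(1 - X\<^sub>1\<^sup>w\<^sup>1) A + B (1 - X\<^sub>2\<^sup>w\<^sup>2)\<close>, which is the image of \<open>B - X\<^sub>1\<^sup>w\<^sup>1 A\<close> under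
  \<open>1 + (S,S)\<close>. Subtracting this preimage from an element of the kernel leaves an
  element killed by \<open>1 + (S,S)\<close>, on which the five-term generator of \<open>\<I>\<^sub>2\<close>
  reduces to \<open>-(1 + (U,U) + (U\<^sup>2,U\<^sup>2))\<close>; so it lies in \<open>V[I\<^sub>D]\<close>.
\<close>

lemma (in vector_space) subspace_linear_retraction:
  assumes "subspace W"
  obtains f where "Vector_Spaces.linear scale scale f" "\<And>x. f x \<in> W" "\<And>x. x \<in> W \<Longrightarrow> f x = x"
proof -
  interpret pair: vector_space_pair scale scale ..
  obtain B where B: "B \<subseteq> W" "independent B" "W \<subseteq> span B"
    using maximal_independent_subset by blast
  define C where "C = extend_basis B"
  have C: "B \<subseteq> C" "independent C" "span C = UNIV"
    using B(2) unfolding C_def by (auto simp: extend_basis_superset independent_extend_basis)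
  obtain f where f: "Vector_Spaces.linear scale scale f" "\<And>x. x \<in> C \<Longrightarrow> f x = (if x \<in> B then x else 0)"
    using pair.linear_independent_extend[OF C(2), of "\<lambda>x. if x \<in> B then x else 0"] by blast
  have "f x \<in> W" for x
  proof -
    have "f x \<in> span (f ` C)" using C(3) pair.linear_span_image[OF f(1), of C] by blast
    also have "\<dots> \<subseteq> W"
      using f(2) B(1) subspace_0[OF assms] by (intro span_minimal[OF _ assms]) auto
    finally show ?thesis .
  qed
  moreover have "f x = x" if "x \<in> W" for x
    using pair.linear_eq_on_span[OF f(1) linear_id, of B x] f(2) C(1) B(3) that by (auto simp: subset_iff)
  ultimately show ?thesis using f(1) that by blast
qed

interpretation rat_poly: vector_space "smult :: rat \<Rightarrow> rat poly \<Rightarrow> rat poly"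
  by unfold_locales (auto simp: smult_add_right smult_add_left)

section \<open>The action on \<open>V\<^sub>w\<close>\<close>

definition homog :: "nat \<Rightarrow> rat poly \<Rightarrow> rat \<Rightarrow> rat \<Rightarrow> rat" where
  "homog n p x y = (\<Sum>i\<le>n. coeff p i * x^i * y^(n-i))"

lemma homog_eq_power_mult_poly:
  assumes "y \<noteq> 0" "degree p \<le> n"
  shows "homog n p x y = y^n * poly p (x/y)"
proof -
  have "poly p (x/y) = (\<Sum>i\<le>n. coeff p i * (x/y)^i)"
    unfolding poly_altdef
    by (rule sum.mono_neutral_left) (use assms in \<open>auto simp: coeff_eq_0\<close>)
  hence "y^n * poly p (x/y) = (\<Sum>i\<le>n. coeff p i * (y^n * (x/y)^i))"
    by (simp add: sum_distrib_left algebra_simps)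
  also have "\<dots> = (\<Sum>i\<le>n. coeff p i * x^i * y^(n-i))"
  proof (rule sum.cong[OF refl])
    fix i assume "i \<in> {..n}"
    hence "y^n = y^i * y^(n-i)" by (simp add: power_add[symmetric])
    thus "coeff p i * (y^n * (x/y)^i) = coeff p i * x^i * y^(n-i)"
      using assms(1) by (simp add: power_divide field_simps)
  qed
  finally show ?thesis unfolding homog_def by simp
qed

lemma poly_eq_homog: "degree p \<le> n \<Longrightarrow> poly p x = homog n p x 1"
  using homog_eq_power_mult_poly[of 1 p n x] by simp

lemma homog_at_zero: "homog n p x 0 = coeff p n * x^n"
proof -
  have "homog n p x 0 = (\<Sum>i\<in>{n}. coeff p i * x^i * 0^(n-i))"
    unfolding homog_def by (rule sum.mono_neutral_right) auto
  thus ?thesis by simp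
qed

lemma homog_add: "homog n (p + q) x y = homog n p x y + homog n q x y"
  unfolding homog_def by (simp add: sum.distrib algebra_simps)

lemma homog_smult: "homog n (smult c p) x y = c * homog n p x y"
  unfolding homog_def by (simp add: sum_distrib_left algebra_simps)

lemma homog_zero [simp]: "homog n 0 x y = 0"
  unfolding homog_def by simp

lemma homog_sum: "homog n (\<Sum>i\<in>A. f i) x y = (\<Sum>i\<in>A. homog n (f i) x y)"
  by (induction A rule: infinite_finite_induct) (auto simp: homog_add)

lemma homog_minus_minus: "even n \<Longrightarrow> homog n p (-x) (-y) = homog n p x y"
  unfolding homog_def
proof (rule sum.cong[OF refl])
  fix i assume "even n" "i \<in> {..n}"
  hence sign: "(-1::rat)^i * (-1)^(n-i) = 1"
    by (simp add: power_add[symmetric])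
  have "(-x)^i * (-y)^(n-i) = ((-1)^i * (-1)^(n-i)) * (x^i * y^(n-i))"
    by (simp add: power_minus[of x] power_minus[of y] algebra_simps)
  then show "coeff p i * (- x) ^ i * (- y) ^ (n - i) = coeff p i * x ^ i * y ^ (n - i)"
    using sign by (simp add: mult.assoc)
qed

lemma coeff_mult_degree_bound_sum:
  fixes p q :: "'a::comm_ring_1 poly"
  assumes "degree p \<le> m" "degree q \<le> k"
  shows "coeff (p*q) (m+k) = coeff p m * coeff q k"
proof -
  have "coeff (p*q) (m+k) = (\<Sum>i\<le>m+k. coeff p i * coeff q (m+k-i))" by (simp add: coeff_mult)
  also have "\<dots> = (\<Sum>i\<in>{m}. coeff p i * coeff q (m+k-i))"
  proof (rule sum.mono_neutral_right)
    show "\<forall>i\<in>{..m + k} - {m}. coeff p i * coeff q (m + k - i) = 0"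
    proof
      fix i assume "i \<in> {..m + k} - {m}"
      hence "i < m \<or> i > m" by auto
      thus "coeff p i * coeff q (m + k - i) = 0"
        using assms by (auto simp: coeff_eq_0)
    qed
  qed auto
  finally show ?thesis by simp
qed

lemma degree_linear_power_le: "degree ([:u,v:]^i) \<le> i"
  by (rule order.trans[OF degree_power_le]) (auto intro: order.trans[OF degree_pCons_le])

lemma coeff_linear_power_top: "coeff (([:u,v:]::'a::comm_ring_1 poly)^i) i = v^i"
proof (induction i)
  case (Suc i)
  have "coeff ([:u,v:]^i * [:u,v:]) (i + 1) = coeff ([:u,v:]^i) i * coeff [:u,v:] 1"
    by (rule coeff_mult_degree_bound_sum) (auto intro: degree_linear_power_le order.trans[OF degree_pCons_le])
  thus ?case using Suc by (simp add: power_Suc2 mult.commute)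
qed simp

lemma degree_img_le: "i \<le> w \<Longrightarrow> degree (img w g i) \<le> w"
proof (cases g)
  case (fields a b c d)
  assume "i \<le> w"
  have "degree (img w g i) \<le> i + (w - i)" unfolding fields img.simps
    by (rule order.trans[OF degree_mult_le]) (intro add_mono degree_linear_power_le)
  thus ?thesis using \<open>i \<le> w\<close> by simp
qed

lemma homog_img:
  assumes "i \<le> w"
  shows "homog w (img w (a,b,c,d) i) x y
    = (of_int d * x - of_int b * y)^i * (of_int a * y - of_int c * x)^(w-i)"
proof (cases "y = 0")
  case True
  have "coeff (img w (a,b,c,d) i) (i + (w-i)) = of_int d ^ i * (- of_int c)^(w-i)"
    unfolding img.simps
    by (subst coeff_mult_degree_bound_sum) (auto simp: coeff_linear_power_top degree_linear_power_le)
  moreover have "i + (w-i) = w" "x^w = x^i * x^(w-i)" using assms by (simp_all add: power_add[symmetric])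
  moreover have "(- (x * of_int c))^(w-i) = x^(w-i) * (- of_int c)^(w-i)"
    by (simp add: power_mult_distrib[symmetric])
  ultimately show ?thesis using True assms
    by (simp add: homog_at_zero power_mult_distrib mult_ac)
next
  case False
  have "homog w (img w (a,b,c,d) i) x y = y^w * poly (img w (a,b,c,d) i) (x/y)"
    by (rule homog_eq_power_mult_poly[OF False degree_img_le[OF assms]])
  also have "y^w = y^i * y^(w-i)" using assms by (simp add: power_add[symmetric])
  finally show ?thesis using False
    by (simp add: power_mult_distrib[symmetric] field_simps)
qed

lemma homog_act1:
  "homog w (act1 w (a,b,c,d) P) x y = homog w P (of_int d * x - of_int b * y) (of_int a * y - of_int c * x)"
  unfolding act1_def homog_sum homog_smult
  by (subst homog_def, rule sum.cong[OF refl]) (simp del: img.simps add: homog_img mult_ac)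

lemma degree_act1_le: "degree (act1 w g P) \<le> w"
  unfolding act1_def
  by (rule degree_sum_le) (auto intro: order.trans[OF degree_smult_le] degree_img_le)

lemma act1_mmul: "act1 w g (act1 w h P) = act1 w (mmul g h) P"
proof -
  obtain a b c d where g: "g = (a,b,c,d)" by (cases g)
  obtain a' b' c' d' where h: "h = (a',b',c',d')" by (cases h)
  have "poly (act1 w g (act1 w h P)) x = poly (act1 w (mmul g h) P) x" for x
    unfolding poly_eq_homog[OF degree_act1_le] g h mmul.simps homog_act1
    by (simp add: algebra_simps)
  thus ?thesis by (intro iffD1[OF poly_eq_poly_eq_iff] ext)
qed

lemma act1_mI: "degree P \<le> w \<Longrightarrow> act1 w mI P = P"
  by (intro iffD1[OF poly_eq_poly_eq_iff] ext)
     (simp add: poly_eq_homog[OF degree_act1_le] poly_eq_homog mI_def homog_act1 del: img.simps)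

lemma act1_neg_mI: "even w \<Longrightarrow> act1 w (-1,0,0,-1) P = act1 w mI P"
  by (intro iffD1[OF poly_eq_poly_eq_iff] ext)
     (simp add: poly_eq_homog[OF degree_act1_le] mI_def homog_act1
        homog_minus_minus[of w P "-x" "-1" for x, simplified] del: img.simps)

lemma act1_zero [simp]: "act1 w g 0 = 0"
  unfolding act1_def by simp

lemma act1_add: "act1 w g (P + Q) = act1 w g P + act1 w g Q"
  unfolding act1_def by (simp add: smult_add_left sum.distrib)

lemma act1_sum: "act1 w g (\<Sum>i\<in>A. f i) = (\<Sum>i\<in>A. act1 w g (f i))"
  by (induction A rule: infinite_finite_induct) (auto simp: act1_add)

lemma smult_sum_right: "smult a (\<Sum>i\<in>A. f i) = (\<Sum>i\<in>A. smult a (f i))"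
  by (induction A rule: infinite_finite_induct) (auto simp: smult_add_right)

lemma act1_smult: "act1 w g (smult c P) = smult c (act1 w g P)"
  unfolding act1_def by (simp add: smult_sum_right)

lemma act1_minus: "act1 w g (- P) = - act1 w g P"
  using act1_smult[of w g "-1" P] by simp

lemma act1_diff: "act1 w g (P - Q) = act1 w g P - act1 w g Q"
  using act1_add[of w g P "-Q"] by (simp add: act1_minus)

lemma act1_monom: "k \<le> w \<Longrightarrow> act1 w g (monom c k) = smult c (img w g k)"
proof -
  assume k: "k \<le> w"
  have "act1 w g (monom c k) = (\<Sum>i\<in>{k}. smult (coeff (monom c k) i) (img w g i))"
    unfolding act1_def by (rule sum.mono_neutral_right) (use k in auto)
  thus ?thesis by simp
qed

lemma mmul_mI_left [simp]: "mmul mI h = h"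
  by (cases h) (simp add: mI_def)

lemma mmul_mI_right [simp]: "mmul h mI = h"
  by (cases h) (simp add: mI_def)

lemma mI_in_SL2: "mI \<in> SL2"
  by (simp add: mI_def SL2_def)

section \<open>The group rings and their left ideals\<close>

lemma zg_act_Nil [simp]: "zg_act w [] P = 0"
  unfolding zg_act_def by simp

lemma zg_act_Cons [simp]: "zg_act w ((n,g) # x) P = smult (of_int n) (act1 w g P) + zg_act w x P"
  unfolding zg_act_def by simp

lemma zg_act_append [simp]: "zg_act w (x @ y) P = zg_act w x P + zg_act w y P"
  unfolding zg_act_def by simp

lemma zg_act_zero [simp]: "zg_act w x 0 = 0"
  by (induction x) auto

lemma zg_mult_Nil_left [simp]: "zg_mult [] y = []"
  by (simp add: zg_mult_def)

lemma zg_act_zg_mult: "zg_act w (zg_mult x y) P = zg_act w x (zg_act w y P)"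
proof -
  have "zg_act w (map (\<lambda>(n,h). (m*n, mmul g h)) y) P = smult (of_int m) (act1 w g (zg_act w y P))"
    for m g by (induction y) (auto simp: act1_add act1_smult act1_mmul smult_add_right)
  then show ?thesis unfolding zg_mult_def by (induction x) auto
qed

lemma degree_zg_act_le: "degree (zg_act w x P) \<le> w"
  by (induction x) (auto intro!: degree_add_le order.trans[OF degree_smult_le] degree_act1_le)

lemma lideal1_Cons_mono: "lideal1 gs \<subseteq> lideal1 (g # gs)"
proof
  fix x assume "x \<in> lideal1 gs"
  then obtain xs where "x = concat (map2 zg_mult xs gs)" "length xs = length gs" "\<forall>y\<in>set xs. zg_ok y"
    unfolding lideal1_def by blast
  then show "x \<in> lideal1 (g # gs)"
    unfolding lideal1_def by (intro CollectI exI[of _ "[] # xs"]) (simp add: zg_ok_def)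
qed

lemma zg_mult_unit_in_lideal1: "zg_mult [(1,mI)] g \<in> lideal1 (g # gs)"
  unfolding lideal1_def
  by (intro CollectI exI[of _ "[(1,mI)] # replicate (length gs) []"])
     (simp add: zg_ok_def mI_in_SL2 zip_replicate1)

lemma zg_act_lideal1_eq_0:
  assumes "x \<in> lideal1 gens" "\<forall>g\<in>set gens. zg_act w g P = 0"
  shows "zg_act w x P = 0"
proof -
  obtain xs where "x = concat (map2 zg_mult xs gens)" "length xs = length gens"
    using assms(1) unfolding lideal1_def by blast
  moreover have "zg_act w (concat (map2 zg_mult xs gens)) P = 0" if "length xs = length gens" for xs
    using that assms(2)
  proof (induction xs arbitrary: gens)
    case (Cons x xs)
    then obtain g gs where "gens = g # gs" by (cases gens) auto
    with Cons show ?case by (auto simp: zg_act_zg_mult)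
  qed simp
  ultimately show ?thesis by simp
qed

lemma annihilator_lideal1_iff:
  assumes "degree P \<le> w"
  shows "(\<forall>x\<in>lideal1 gens. zg_act w x P = 0) \<longleftrightarrow> (\<forall>g\<in>set gens. zg_act w g P = 0)"
proof
  show "\<forall>g\<in>set gens. zg_act w g P = 0" if "\<forall>x\<in>lideal1 gens. zg_act w x P = 0"
    using that
  proof (induction gens)
    case (Cons g gs)
    have "zg_act w (zg_mult [(1,mI)] g) P = 0"
      using Cons.prems zg_mult_unit_in_lideal1 by blast
    then have "zg_act w g P = 0"
      by (simp add: zg_act_zg_mult act1_mI degree_zg_act_le)
    moreover have "\<forall>g\<in>set gs. zg_act w g P = 0"
      using Cons.IH Cons.prems lideal1_Cons_mono by blast
    ultimately show ?case by simp
  qed simp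
qed (blast intro: zg_act_lideal1_eq_0)

lemma W1_iff:
  "P \<in> W1 w \<longleftrightarrow> degree P \<le> w \<and> act1 w mS P = - P \<and> P + act1 w mU P + act1 w (mmul mU mU) P = 0"
proof (cases "degree P \<le> w")
  case True
  have "zg_act w [(1,mI),(1,mS)] P = P + act1 w mS P"
    "zg_act w [(1,mI),(1,mU),(1,mmul mU mU)] P = P + act1 w mU P + act1 w (mmul mU mU) P"
    by (simp_all add: act1_mI True add.assoc)
  moreover have "act1 w mS P = - P \<longleftrightarrow> P + act1 w mS P = 0"
    by (metis add.commute eq_neg_iff_add_eq_0)
  ultimately show ?thesis
    unfolding W1_def I1_def inV1_def by (simp add: annihilator_lideal1_iff[OF True] True add.assoc)
qed (simp add: W1_def inV1_def)

lemma subspace_W1: "rat_poly.subspace (W1 w)"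
  unfolding rat_poly.subspace_def
proof (intro conjI ballI allI)
  have add3: "(P + Q) + act1 w g (P + Q) + act1 w h (P + Q)
      = (P + act1 w g P + act1 w h P) + (Q + act1 w g Q + act1 w h Q)" for P Q g h
    by (simp add: act1_add algebra_simps)
  show "0 \<in> W1 w" by (simp add: W1_iff)
  show "P + Q \<in> W1 w" if "P \<in> W1 w" "Q \<in> W1 w" for P Q
    using that by (simp add: W1_iff act1_add add3 degree_add_le)
  show "smult c P \<in> W1 w" if "P \<in> W1 w" for c P
    using that by (simp add: W1_iff act1_smult smult_add_right[symmetric])
qed

section \<open>The action on \<open>V\<^sub>w\<^sub>1\<^sub>,\<^sub>w\<^sub>2\<close>\<close>

lemma coeff_tens: "coeff (tens f q) i = smult (coeff f i) q"
  unfolding tens_def by (simp add: coeff_map_poly)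

lemma tens_add_left: "tens (f + f') q = tens f q + tens f' q"
  by (rule poly_eqI) (simp add: coeff_tens smult_add_left)

lemma tens_add_right: "tens f (q + q') = tens f q + tens f q'"
  by (rule poly_eqI) (simp add: coeff_tens smult_add_right)

lemma tens_diff_left: "tens (f - f') q = tens f q - tens f' q"
  by (rule poly_eqI) (simp add: coeff_tens smult_diff_left)

lemma tens_diff_right: "tens f (q - q') = tens f q - tens f q'"
  by (rule poly_eqI) (simp add: coeff_tens smult_diff_right)

lemma tens_minus_left: "tens (- f) q = - tens f q"
  by (rule poly_eqI) (simp add: coeff_tens)

lemma tens_minus_right: "tens f (- q) = - tens f q"
  by (rule poly_eqI) (simp add: coeff_tens)

lemma tens_zero_left [simp]: "tens 0 q = 0"
  by (rule poly_eqI) (simp add: coeff_tens)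

lemma tens_zero_right [simp]: "tens f 0 = 0"
  by (rule poly_eqI) (simp add: coeff_tens)

lemma tens_smult_left: "tens (smult c f) q = tens f (smult c q)"
  by (rule poly_eqI) (simp add: coeff_tens)

lemma smult_const_tens: "smult [:c:] (tens f q) = tens f (smult c q)"
  by (rule poly_eqI) (simp add: coeff_tens)

lemma tens_sum_left: "tens (\<Sum>i\<in>A. f i) q = (\<Sum>i\<in>A. tens (f i) q)"
  by (induction A rule: infinite_finite_induct) (auto simp: tens_add_left)

lemma tens_sum_right: "tens f (\<Sum>i\<in>A. q i) = (\<Sum>i\<in>A. tens f (q i))"
  by (induction A rule: infinite_finite_induct) (auto simp: tens_add_right)

lemma degree_map_poly_le: "f 0 = 0 \<Longrightarrow> degree (map_poly f p) \<le> degree p"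
  by (rule degree_le) (simp add: coeff_map_poly coeff_eq_0)

lemma degree_tens_le: "degree (tens f q) \<le> degree f"
  unfolding tens_def by (rule degree_map_poly_le) simp

lemma map_poly_const_eq_tens_one: "map_poly (\<lambda>c. [:c:]) f = tens f 1"
  by (rule poly_eqI) (simp add: coeff_map_poly coeff_tens)

lemma monom_eq_tens: "monom q w = tens (monom 1 w) q"
  by (rule poly_eqI) (simp add: coeff_tens)

lemma inV2_tens: "degree f \<le> w1 \<Longrightarrow> degree q \<le> w2 \<Longrightarrow> inV2 w1 w2 (tens f q)"
  unfolding inV2_def by (auto intro: order.trans[OF degree_tens_le] simp: coeff_tens)

definition act_fst :: "nat \<Rightarrow> mat2 \<Rightarrow> rat poly poly \<Rightarrow> rat poly poly" where
  "act_fst w g Q = (\<Sum>i\<le>w. tens (img w g i) (coeff Q i))"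

definition row :: "nat \<Rightarrow> rat poly poly \<Rightarrow> nat \<Rightarrow> rat poly" where
  "row w Q j = (\<Sum>i\<le>w. monom (coeff (coeff Q i) j) i)"

lemma coeff_row: "coeff (row w Q j) i = (if i \<le> w then coeff (coeff Q i) j else 0)"
  unfolding row_def coeff_sum coeff_monom by (simp add: sum.delta)

lemma degree_row_le: "degree (row w Q j) \<le> w"
  by (rule degree_le) (simp add: coeff_row)

lemma row_add: "row w (P + Q) j = row w P j + row w Q j"
  by (rule poly_eqI) (simp add: coeff_row)

lemma row_minus: "row w (- P) j = - row w P j"
  by (rule poly_eqI) (simp add: coeff_row)

lemma row_zero [simp]: "row w 0 j = 0"
  by (rule poly_eqI) (simp add: coeff_row)

lemma coeff_act_fst: "coeff (act_fst w g Q) k = (\<Sum>i\<le>w. smult (coeff (img w g i) k) (coeff Q i))"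
  unfolding act_fst_def coeff_sum coeff_tens ..

lemma degree_act_fst_le: "degree (act_fst w g Q) \<le> w"
  unfolding act_fst_def
  by (rule degree_sum_le) (auto intro: order.trans[OF degree_tens_le] degree_img_le)

lemma row_act_fst: "row w (act_fst w g Q) j = act1 w g (row w Q j)"
proof (rule poly_eqI)
  fix k
  have "coeff (act1 w g (row w Q j)) k = (\<Sum>i\<le>w. coeff (coeff Q i) j * coeff (img w g i) k)"
    unfolding act1_def coeff_sum by (simp add: coeff_row)
  moreover have "k > w \<Longrightarrow> (\<Sum>i\<le>w. coeff (coeff Q i) j * coeff (img w g i) k) = 0"
    by (auto intro!: sum.neutral coeff_eq_0 order.strict_trans1[OF degree_img_le])
  ultimately show "coeff (row w (act_fst w g Q) j) k = coeff (act1 w g (row w Q j)) k"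
    by (auto simp: coeff_row coeff_act_fst coeff_sum mult.commute)
qed

lemma poly_poly_eqI_rows:
  assumes "degree Q \<le> w" "degree Q' \<le> w" "\<And>j. row w Q j = row w Q' j"
  shows "Q = Q'"
proof (rule poly_eqI, rule poly_eqI)
  fix i j
  show "coeff (coeff Q i) j = coeff (coeff Q' i) j"
  proof (cases "i \<le> w")
    case True
    then show ?thesis using arg_cong[OF assms(3)[of j], of "\<lambda>p. coeff p i"] by (simp add: coeff_row)
  next
    case False
    then show ?thesis using assms(1,2) by (simp add: coeff_eq_0)
  qed
qed

lemma act_fst_mmul: "act_fst w g (act_fst w g' Q) = act_fst w (mmul g g') Q"
  by (rule poly_poly_eqI_rows[OF degree_act_fst_le degree_act_fst_le]) (simp add: row_act_fst act1_mmul)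

lemma act_fst_mI: "degree Q \<le> w \<Longrightarrow> act_fst w mI Q = Q"
  by (rule poly_poly_eqI_rows[OF degree_act_fst_le]) (auto simp: row_act_fst act1_mI degree_row_le)

lemma act_fst_neg_mI: "even w \<Longrightarrow> act_fst w (-1,0,0,-1) Q = act_fst w mI Q"
  by (rule poly_poly_eqI_rows[OF degree_act_fst_le degree_act_fst_le])
     (simp add: row_act_fst act1_neg_mI del: img.simps)

lemma act_fst_tens: "act_fst w g (tens f q) = tens (act1 w g f) q"
  unfolding act_fst_def act1_def tens_sum_left by (simp add: coeff_tens tens_smult_left)

lemma act_fst_add: "act_fst w g (Q + Q') = act_fst w g Q + act_fst w g Q'"
  unfolding act_fst_def by (simp add: tens_add_right sum.distrib)

lemma act_fst_smult_const: "act_fst w g (smult [:c:] Q) = smult [:c:] (act_fst w g Q)"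
  unfolding act_fst_def by (simp add: smult_const_tens smult_sum_right)

lemma map_poly_act1_act_fst:
  "map_poly (act1 w2 h) (act_fst w1 g Q) = act_fst w1 g (map_poly (act1 w2 h) Q)"
  by (rule poly_eqI) (simp add: coeff_map_poly coeff_act_fst act1_sum act1_smult)

lemma act2_eq_act_fst: "act2 w1 w2 (g,h) P = act_fst w1 g (map_poly (act1 w2 h) P)"
  unfolding act2_def act_fst_def
proof (rule sum.cong[OF refl])
  fix i
  have "tens (img w1 g i) (coeff (map_poly (act1 w2 h) P) i)
      = tens (img w1 g i) (\<Sum>j\<le>w2. smult (coeff (coeff P i) j) (img w2 h j))"
    by (simp add: coeff_map_poly act1_def)
  also have "\<dots> = (\<Sum>j\<le>w2. smult [:coeff (coeff P i) j:] (tens (img w1 g i) (img w2 h j)))"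
    by (simp add: tens_sum_right smult_const_tens)
  finally show "(\<Sum>j\<le>w2. smult [:coeff (coeff P i) j:] (tens (img w1 (fst (g, h)) i) (img w2 (snd (g, h)) j)))
      = tens (img w1 g i) (coeff (map_poly (act1 w2 h) P) i)" by simp
qed

lemma act2_mmul: "act2 w1 w2 (g,h) (act2 w1 w2 (g',h') P) = act2 w1 w2 (mmul g g', mmul h h') P"
  by (simp add: act2_eq_act_fst map_poly_act1_act_fst act_fst_mmul map_poly_map_poly comp_def act1_mmul)

lemma act2_tens: "act2 w1 w2 (g,h) (tens f q) = tens (act1 w1 g f) (act1 w2 h q)"
proof -
  have "map_poly (act1 w2 h) (tens f q) = tens f (act1 w2 h q)"
    by (rule poly_eqI) (simp add: coeff_map_poly coeff_tens act1_smult)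
  then show ?thesis by (simp add: act2_eq_act_fst act_fst_tens)
qed

lemma act2_add: "act2 w1 w2 gh (P + Q) = act2 w1 w2 gh P + act2 w1 w2 gh Q"
proof -
  have "map_poly (act1 w2 h) (P + Q) = map_poly (act1 w2 h) P + map_poly (act1 w2 h) Q" for h
    by (rule poly_eqI) (simp add: coeff_map_poly act1_add)
  then show ?thesis by (cases gh) (simp add: act2_eq_act_fst act_fst_add)
qed

lemma act2_smult_const: "act2 w1 w2 gh (smult [:c:] P) = smult [:c:] (act2 w1 w2 gh P)"
proof -
  have "map_poly (act1 w2 h) (smult [:c:] P) = smult [:c:] (map_poly (act1 w2 h) P)" for h
    by (rule poly_eqI) (simp add: coeff_map_poly act1_smult)
  then show ?thesis by (cases gh) (simp add: act2_eq_act_fst act_fst_smult_const)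
qed

lemma smult_const_one [simp]: "smult [:1:] (P::'a::comm_ring_1 poly poly) = P"
  by (rule poly_eqI) simp

lemma smult_const_minus_one: "smult [:-1:] (P::'a::comm_ring_1 poly poly) = - P"
  by (rule poly_eqI) simp

lemma act2_minus: "act2 w1 w2 gh (- P) = - act2 w1 w2 gh P"
  using act2_smult_const[of w1 w2 gh "-1" P] by (simp add: smult_const_minus_one)

lemma act2_diff: "act2 w1 w2 gh (P - Q) = act2 w1 w2 gh P - act2 w1 w2 gh Q"
  using act2_add[of w1 w2 gh P "-Q"] by (simp add: act2_minus)

lemma act2_zero [simp]: "act2 w1 w2 gh 0 = 0"
  using act2_smult_const[of w1 w2 gh 0 0] by simp

lemma inV2_act2: "inV2 w1 w2 (act2 w1 w2 gh P)"
proof -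
  obtain g h where gh: "gh = (g,h)" by (cases gh)
  have "degree (coeff (act_fst w1 g (map_poly (act1 w2 h) P)) i) \<le> w2" for i
    unfolding coeff_act_fst
    by (rule degree_sum_le) (auto intro: order.trans[OF degree_smult_le] simp: coeff_map_poly degree_act1_le)
  then show ?thesis unfolding inV2_def gh act2_eq_act_fst using degree_act_fst_le by auto
qed

lemma act2_mI_left: "degree P \<le> w1 \<Longrightarrow> act2 w1 w2 (mI,h) P = map_poly (act1 w2 h) P"
  unfolding act2_eq_act_fst by (rule act_fst_mI) (rule order.trans[OF degree_map_poly_le], simp_all)

lemma map_poly_act1_mI: "inV2 w1 w2 P \<Longrightarrow> map_poly (act1 w2 mI) P = P"
  unfolding inV2_def by (auto intro!: poly_eqI simp: coeff_map_poly act1_mI)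

lemma act2_mI_right: "inV2 w1 w2 P \<Longrightarrow> act2 w1 w2 (g,mI) P = act_fst w1 g P"
  by (simp add: act2_eq_act_fst map_poly_act1_mI)

lemma act2_mI_mI: "inV2 w1 w2 P \<Longrightarrow> act2 w1 w2 (mI,mI) P = P"
  by (simp add: act2_mI_right act_fst_mI inV2_def)

lemma act2_neg_mI_left: "even w1 \<Longrightarrow> act2 w1 w2 ((-1,0,0,-1),h) P = act2 w1 w2 (mI,h) P"
  unfolding act2_eq_act_fst by (rule act_fst_neg_mI)

lemma act2_neg_mI_right:
  assumes "even w2" shows "act2 w1 w2 (g,(-1,0,0,-1)) P = act2 w1 w2 (g,mI) P"
proof -
  have "act1 w2 (-1,0,0,-1) = act1 w2 mI"
    using act1_neg_mI[OF assms] by (intro ext) (simp del: img.simps)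
  then show ?thesis unfolding act2_eq_act_fst by simp
qed

lemma coeff_act2_mI_left: "inV2 w1 w2 R \<Longrightarrow> coeff (act2 w1 w2 (mI,h) R) i = act1 w2 h (coeff R i)"
  unfolding inV2_def by (simp add: act2_mI_left coeff_map_poly)

lemma row_act2_mI_right: "inV2 w1 w2 R \<Longrightarrow> row w1 (act2 w1 w2 (g,mI) R) j = act1 w1 g (row w1 R j)"
  by (simp add: act2_mI_right row_act_fst)

lemma zg2_act_Nil [simp]: "zg2_act w1 w2 [] P = 0"
  unfolding zg2_act_def by simp

lemma zg2_act_Cons [simp]:
  "zg2_act w1 w2 ((n,g,h) # x) P = smult [:of_int n:] (act2 w1 w2 (g,h) P) + zg2_act w1 w2 x P"
  unfolding zg2_act_def by simp

lemma zg2_act_append [simp]: "zg2_act w1 w2 (x @ y) P = zg2_act w1 w2 x P + zg2_act w1 w2 y P"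
  unfolding zg2_act_def by simp

lemma zg2_act_zero [simp]: "zg2_act w1 w2 x 0 = 0"
  by (induction x) auto

lemma zg2_act_add: "zg2_act w1 w2 x (P + Q) = zg2_act w1 w2 x P + zg2_act w1 w2 x Q"
  by (induction x) (auto simp: act2_add smult_add_right)

lemma zg2_act_minus: "zg2_act w1 w2 x (- P) = - zg2_act w1 w2 x P"
  by (induction x) (auto simp: act2_minus)

lemma zg2_act_diff: "zg2_act w1 w2 x (P - Q) = zg2_act w1 w2 x P - zg2_act w1 w2 x Q"
  using zg2_act_add[of w1 w2 x P "- Q"] by (simp add: zg2_act_minus)

lemma zg2_mult_Nil_left [simp]: "zg2_mult [] y = []"
  by (simp add: zg2_mult_def)

lemma zg2_act_zg2_mult: "zg2_act w1 w2 (zg2_mult x y) P = zg2_act w1 w2 x (zg2_act w1 w2 y P)"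
proof -
  have "zg2_act w1 w2 (map (\<lambda>(n,h,h'). (m*n, mmul g h, mmul g' h')) y) P
      = smult [:of_int m:] (act2 w1 w2 (g,g') (zg2_act w1 w2 y P))" for m g g'
  proof (induction y)
    case (Cons a y)
    obtain n h h' where a: "a = (n,h,h')" by (cases a)
    have "smult [:of_int m * of_int n:] X = smult [:of_int m:] (smult [:of_int n:] X)"
      for X :: "rat poly poly" by (simp add: mult.commute)
    with Cons show ?case
      by (simp add: a act2_add act2_smult_const act2_mmul smult_add_right)
  qed simp
  then show ?thesis unfolding zg2_mult_def by (induction x) auto
qed

lemma inV2_add: "inV2 w1 w2 P \<Longrightarrow> inV2 w1 w2 Q \<Longrightarrow> inV2 w1 w2 (P + Q)"
  unfolding inV2_def by (auto intro: degree_add_le)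

lemma inV2_zg2_act: "inV2 w1 w2 (zg2_act w1 w2 x P)"
proof (induction x)
  case Nil
  then show ?case by (simp add: inV2_def)
next
  case (Cons a x)
  have "inV2 w1 w2 (smult [:c:] Q)" if "inV2 w1 w2 Q" for c Q
    using that unfolding inV2_def by (auto intro: order.trans[OF degree_smult_le])
  with Cons show ?case by (cases a) (auto intro!: inV2_add inV2_act2)
qed

lemma lideal2_Cons_mono: "lideal2 gs \<subseteq> lideal2 (g # gs)"
proof
  fix x assume "x \<in> lideal2 gs"
  then obtain xs where "x = concat (map2 zg2_mult xs gs)" "length xs = length gs" "\<forall>y\<in>set xs. zg2_ok y"
    unfolding lideal2_def by blast
  then show "x \<in> lideal2 (g # gs)"
    unfolding lideal2_def by (intro CollectI exI[of _ "[] # xs"]) (simp add: zg2_ok_def)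
qed

lemma zg2_mult_unit_in_lideal2: "zg2_mult [(1,mI,mI)] g \<in> lideal2 (g # gs)"
  unfolding lideal2_def
  by (intro CollectI exI[of _ "[(1,mI,mI)] # replicate (length gs) []"])
     (simp add: zg2_ok_def mI_in_SL2 zip_replicate1)

lemma zg2_act_lideal2_eq_0:
  assumes "x \<in> lideal2 gens" "\<forall>g\<in>set gens. zg2_act w1 w2 g P = 0"
  shows "zg2_act w1 w2 x P = 0"
proof -
  obtain xs where "x = concat (map2 zg2_mult xs gens)" "length xs = length gens"
    using assms(1) unfolding lideal2_def by blast
  moreover have "zg2_act w1 w2 (concat (map2 zg2_mult xs gens)) P = 0" if "length xs = length gens" for xs
    using that assms(2)
  proof (induction xs arbitrary: gens)
    case (Cons x xs)
    then obtain g gs where "gens = g # gs" by (cases gens) auto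
    with Cons show ?case by (auto simp: zg2_act_zg2_mult)
  qed simp
  ultimately show ?thesis by simp
qed

lemma annihilator_lideal2_iff:
  assumes "inV2 w1 w2 P"
  shows "(\<forall>x\<in>lideal2 gens. zg2_act w1 w2 x P = 0) \<longleftrightarrow> (\<forall>g\<in>set gens. zg2_act w1 w2 g P = 0)"
proof
  show "\<forall>g\<in>set gens. zg2_act w1 w2 g P = 0" if "\<forall>x\<in>lideal2 gens. zg2_act w1 w2 x P = 0"
    using that
  proof (induction gens)
    case (Cons g gs)
    have "zg2_act w1 w2 (zg2_mult [(1,mI,mI)] g) P = 0"
      using Cons.prems zg2_mult_unit_in_lideal2 by blast
    then have "zg2_act w1 w2 g P = 0"
      by (simp add: zg2_act_zg2_mult act2_mI_mI inV2_zg2_act)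
    moreover have "\<forall>g\<in>set gs. zg2_act w1 w2 g P = 0"
      using Cons.IH Cons.prems lideal2_Cons_mono by blast
    ultimately show ?case by simp
  qed simp
qed (blast intro: zg2_act_lideal2_eq_0)

definition gen_SS :: zg2 where
  "gen_SS = zg_tens [(1,mI),(1,mS)] [(1,mI),(1,mS)]"

definition gen_five_term :: zg2 where
  "gen_five_term = [(1,mS,mS),(1,mS,mmul mU mS),(1,mmul mU mS,mmul mU mS),(1,mI,mU),(-1,mmul mU mU,mmul mU mU)]"

definition gen_U_fst :: zg2 where
  "gen_U_fst = zg2_mult (zg_tens [(1,mI),(1,mU),(1,mmul mU mU)] [(1,mI)]) DS"

definition gen_U_snd :: zg2 where
  "gen_U_snd = zg2_mult (zg_tens [(1,mI)] [(1,mI),(1,mU),(1,mmul mU mU)]) DS"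

lemma W2_iff:
  "P \<in> W2 w1 w2 \<longleftrightarrow> inV2 w1 w2 P \<and> zg2_act w1 w2 gen_SS P = 0 \<and> zg2_act w1 w2 gen_five_term P = 0
     \<and> zg2_act w1 w2 gen_U_fst P = 0 \<and> zg2_act w1 w2 gen_U_snd P = 0"
proof (cases "inV2 w1 w2 P")
  case True
  have I2_eq: "I2 = lideal2 [gen_SS, gen_five_term, gen_U_fst, gen_U_snd]"
    unfolding I2_def gen_SS_def gen_five_term_def gen_U_fst_def gen_U_snd_def ..
  show ?thesis
    unfolding W2_def I2_eq by (simp add: annihilator_lideal2_iff[OF True] True)
qed (simp add: W2_def)

lemma zg2_act_gen_SS:
  "inV2 w1 w2 P \<Longrightarrow> zg2_act w1 w2 gen_SS P
     = P + act2 w1 w2 (mI,mS) P + act2 w1 w2 (mS,mI) P + act2 w1 w2 (mS,mS) P"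
  by (simp add: gen_SS_def zg_tens_def act2_mI_mI add.assoc)

lemma zg2_act_gen_five_term:
  "zg2_act w1 w2 gen_five_term P = act2 w1 w2 (mS,mS) P + act2 w1 w2 (mS,mmul mU mS) P
     + act2 w1 w2 (mmul mU mS,mmul mU mS) P + act2 w1 w2 (mI,mU) P - act2 w1 w2 (mmul mU mU,mmul mU mU) P"
  by (simp add: gen_five_term_def smult_const_minus_one add.assoc)

lemma zg2_act_DS: "inV2 w1 w2 P \<Longrightarrow> zg2_act w1 w2 DS P = P + act2 w1 w2 (mS,mS) P"
  by (simp add: DS_def act2_mI_mI)

lemma zg2_act_DU:
  "inV2 w1 w2 P \<Longrightarrow> zg2_act w1 w2 DU P = P + act2 w1 w2 (mU,mU) P + act2 w1 w2 (mmul mU mU,mmul mU mU) P"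
  by (simp add: DU_def act2_mI_mI add.assoc)

lemma zg2_act_gen_U_fst:
  "zg2_act w1 w2 gen_U_fst P = zg2_act w1 w2 DS P + act2 w1 w2 (mU,mI) (zg2_act w1 w2 DS P)
     + act2 w1 w2 (mmul mU mU,mI) (zg2_act w1 w2 DS P)"
  unfolding gen_U_fst_def zg2_act_zg2_mult
  by (simp add: zg_tens_def act2_mI_mI inV2_zg2_act add.assoc)

lemma zg2_act_gen_U_snd:
  "zg2_act w1 w2 gen_U_snd P = zg2_act w1 w2 DS P + act2 w1 w2 (mI,mU) (zg2_act w1 w2 DS P)
     + act2 w1 w2 (mI,mmul mU mU) (zg2_act w1 w2 DS P)"
  unfolding gen_U_snd_def zg2_act_zg2_mult
  by (simp add: zg_tens_def act2_mI_mI inV2_zg2_act add.assoc)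

section \<open>The subspace \<open>E\<^sub>w\<^sub>1\<^sub>,\<^sub>w\<^sub>2\<close>\<close>

lemma act1_one: "act1 w g 1 = img w g 0"
  using act1_monom[of 0 w g 1] by (simp add: one_pCons monom_0)

lemma linear_power_uminus_even:
  assumes "even n"
  shows "([:- a, - b:] :: 'a::comm_ring_1 poly) ^ n = [:a, b:] ^ n"
proof -
  have "([:- a, - b:] :: 'a poly) = - [:a, b:]" by simp
  then show ?thesis using assms by (simp only: power_minus_even)
qed

lemma act1_one_X_power:
  assumes "even w"
  shows "act1 w mS 1 = monom 1 w" "act1 w mS (monom 1 w) = 1"
    "act1 w mU 1 = monom 1 w" "act1 w mU (monom 1 w) = [:-1,1:]^w"
    "act1 w (mmul mU mU) 1 = [:-1,1:]^w" "act1 w (mmul mU mU) (monom 1 w) = 1"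
    "act1 w (mmul mU mS) 1 = [:-1,1:]^w" "act1 w (mmul mU mS) (monom 1 w) = monom 1 w"
  using linear_power_uminus_even[OF assms, of 0 1] linear_power_uminus_even[OF assms, of "-1" 1]
    linear_power_uminus_even[OF assms, of 1 0]
  by (simp_all only: act1_one act1_monom[OF order.refl] smult_one)
     (simp_all add: mS_def mU_def monom_altdef one_pCons[symmetric])

lemma act1_mI_one_X_power:
  "act1 w mI 1 = 1" "act1 w mI (monom 1 w) = monom 1 w" "act1 w mI ([:-1,1:]^w) = [:-1,1:]^w"
  by (auto intro!: act1_mI simp: degree_monom_eq degree_linear_power_le)

lemma mmul_mS_mS: "mmul mS mS = (-1,0,0,-1)"
  by (simp add: mS_def)

lemma act1_W1:
  assumes "B \<in> W1 w"
  shows "act1 w mS B = - B" "act1 w (mmul mU mU) B = - B - act1 w mU B"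
    "act1 w (mmul mU mS) B = - act1 w mU B" "act1 w mI B = B"
proof -
  have h: "degree B \<le> w" "act1 w mS B = - B" "B + act1 w mU B + act1 w (mmul mU mU) B = 0"
    using assms[unfolded W1_iff] by auto
  show "act1 w mS B = - B" by (fact h(2))
  from h(3) show "act1 w (mmul mU mU) B = - B - act1 w mU B"
    by (simp add: algebra_simps eq_neg_iff_add_eq_0)
  show "act1 w (mmul mU mS) B = - act1 w mU B"
    by (simp add: act1_mmul[symmetric] h(2) act1_minus)
  show "act1 w mI B = B" by (rule act1_mI[OF h(1)])
qed

lemma zg2_act_DS_tens_one:
  assumes "even w2" "B \<in> W1 w1"
  shows "zg2_act w1 w2 DS (tens B 1) = tens B (1 - monom 1 w2)"
proof -
  have "degree B \<le> w1" using assms(2) by (simp add: W1_iff)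
  then have "zg2_act w1 w2 DS (tens B 1) = tens B 1 + tens (act1 w1 mS B) (act1 w2 mS 1)"
    by (simp add: zg2_act_DS inV2_tens act2_tens)
  also have "\<dots> = tens B (1 - monom 1 w2)"
    by (simp add: act1_W1[OF assms(2)] act1_one_X_power[OF assms(1)] tens_minus_left tens_diff_right)
  finally show ?thesis .
qed

lemma zg2_act_DS_tens_X_power:
  assumes "even w1" "A \<in> W1 w2"
  shows "zg2_act w1 w2 DS (tens (monom 1 w1) A) = - tens (1 - monom 1 w1) A"
proof -
  have "degree A \<le> w2" using assms(2) by (simp add: W1_iff)
  then have "zg2_act w1 w2 DS (tens (monom 1 w1) A)
      = tens (monom 1 w1) A + tens (act1 w1 mS (monom 1 w1)) (act1 w2 mS A)"
    by (simp add: zg2_act_DS inV2_tens degree_monom_eq act2_tens)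
  also have "\<dots> = - tens (1 - monom 1 w1) A"
    by (simp add: act1_W1[OF assms(2)] act1_one_X_power[OF assms(1)] tens_minus_right tens_diff_left)
  finally show ?thesis .
qed

lemmas act_tens_distrib = act2_tens act2_add act2_diff act2_minus act1_add act1_diff act1_minus
  tens_add_left tens_add_right tens_diff_left tens_diff_right tens_minus_left tens_minus_right

lemma tens_one_in_W2:
  assumes "even w1" "even w2" "B \<in> W1 w1"
  shows "tens B 1 \<in> W2 w1 w2"
proof -
  have iv: "inV2 w1 w2 (tens B 1)" using assms(3) by (simp add: inV2_tens W1_iff)
  show ?thesis
    unfolding W2_iff
    using iv
    by (simp add: zg2_act_gen_SS zg2_act_gen_five_term zg2_act_gen_U_fst zg2_act_gen_U_snd
       zg2_act_DS_tens_one[OF assms(2,3)] act1_W1[OF assms(3)] act1_one_X_power[OF assms(1)]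
       act1_one_X_power[OF assms(2)] act1_mI_one_X_power act_tens_distrib)
qed

lemma tens_X_power_in_W2:
  assumes "even w1" "even w2" "A \<in> W1 w2"
  shows "tens (monom 1 w1) A \<in> W2 w1 w2"
proof -
  have iv: "inV2 w1 w2 (tens (monom 1 w1) A)" using assms(3) by (simp add: inV2_tens degree_monom_eq W1_iff)
  show ?thesis
    unfolding W2_iff
    using iv
    by (simp add: zg2_act_gen_SS zg2_act_gen_five_term zg2_act_gen_U_fst zg2_act_gen_U_snd
       zg2_act_DS_tens_X_power[OF assms(1,3)] act1_W1[OF assms(3)] act1_one_X_power[OF assms(1)]
       act1_one_X_power[OF assms(2)] act1_mI_one_X_power act_tens_distrib)
qed

lemma zg2_act_gen_five_term_if_DS:
  assumes "inV2 w1 w2 Q" "zg2_act w1 w2 DS Q = 0"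
  shows "zg2_act w1 w2 gen_five_term Q = - zg2_act w1 w2 DU Q"
proof -
  have DS: "Q + act2 w1 w2 (mS,mS) Q = 0" using assms by (simp add: zg2_act_DS)
  have vanish: "act2 w1 w2 (g,h) Q + act2 w1 w2 (mmul g mS, mmul h mS) Q = 0" for g h
    using arg_cong[OF DS, of "act2 w1 w2 (g,h)"] by (simp add: act2_add act2_mmul)
  have "zg2_act w1 w2 gen_five_term Q = - zg2_act w1 w2 DU Q
      + (act2 w1 w2 (mI,mU) Q + act2 w1 w2 (mS,mmul mU mS) Q)
      + (act2 w1 w2 (mU,mU) Q + act2 w1 w2 (mmul mU mS,mmul mU mS) Q) + (Q + act2 w1 w2 (mS,mS) Q)"
    by (simp add: zg2_act_gen_five_term zg2_act_DU assms(1) algebra_simps)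
  then show ?thesis using vanish[of mI mU] vanish[of mU mU] DS by simp
qed

lemma VID_eq_W2_kernel_DS:
  assumes "even w2"
  shows "VID w1 w2 = {Q \<in> W2 w1 w2. zg2_act w1 w2 DS Q = 0}"
proof (intro set_eqI iffI)
  fix Q assume "Q \<in> VID w1 w2"
  then have iv: "inV2 w1 w2 Q" and DS: "zg2_act w1 w2 DS Q = 0" and DU: "zg2_act w1 w2 DU Q = 0"
    unfolding VID_def by auto
  have "act2 w1 w2 (mI,mS) (zg2_act w1 w2 DS Q) = 0" by (simp add: DS)
  then have "act2 w1 w2 (mI,mS) Q + act2 w1 w2 (mS,mI) Q = 0"
    by (simp add: zg2_act_DS[OF iv] act2_add act2_mmul mmul_mS_mS act2_neg_mI_right[OF assms])
  moreover have "zg2_act w1 w2 gen_SS Q = (act2 w1 w2 (mI,mS) Q + act2 w1 w2 (mS,mI) Q) + zg2_act w1 w2 DS Q"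
    by (simp add: zg2_act_gen_SS[OF iv] zg2_act_DS[OF iv] algebra_simps)
  ultimately have "zg2_act w1 w2 gen_SS Q = 0" using DS by simp
  moreover have "zg2_act w1 w2 gen_five_term Q = 0"
    using zg2_act_gen_five_term_if_DS[OF iv DS] DU by simp
  ultimately show "Q \<in> {Q \<in> W2 w1 w2. zg2_act w1 w2 DS Q = 0}"
    using iv DS by (simp add: W2_iff zg2_act_gen_U_fst zg2_act_gen_U_snd)
next
  fix Q assume "Q \<in> {Q \<in> W2 w1 w2. zg2_act w1 w2 DS Q = 0}"
  then have "inV2 w1 w2 Q" "zg2_act w1 w2 DS Q = 0" "zg2_act w1 w2 gen_five_term Q = 0"
    by (auto simp: W2_iff)
  then show "Q \<in> VID w1 w2"
    using zg2_act_gen_five_term_if_DS unfolding VID_def by auto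
qed

lemma W2_add: "P \<in> W2 w1 w2 \<Longrightarrow> Q \<in> W2 w1 w2 \<Longrightarrow> P + Q \<in> W2 w1 w2"
  unfolding W2_def by (auto simp: zg2_act_add intro: inV2_add)

lemma W2_diff: "P \<in> W2 w1 w2 \<Longrightarrow> Q \<in> W2 w1 w2 \<Longrightarrow> P - Q \<in> W2 w1 w2"
  unfolding W2_def inV2_def by (auto simp: zg2_act_diff intro: degree_diff_le)

lemma E2_subset_W2:
  assumes "even w1" "even w2"
  shows "E2 w1 w2 \<subseteq> W2 w1 w2"
  unfolding E2_def map_poly_const_eq_tens_one monom_eq_tens VID_eq_W2_kernel_DS[OF assms(2)]
  using assms by (auto intro!: W2_add tens_one_in_W2 tens_X_power_in_W2)

section \<open>The map \<open>\<Phi>\<^sub>S\<close>\<close>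

lemma tens_in_tspan: "f \<in> A \<Longrightarrow> q \<in> B \<Longrightarrow> tens f q \<in> tspan A B"
  unfolding tspan_def by (intro CollectI exI[of _ "[(f,q)]"]) simp

lemma sum_tens_in_tspan:
  assumes "finite J" "\<And>j. j \<in> J \<Longrightarrow> f j \<in> A" "\<And>j. j \<in> J \<Longrightarrow> q j \<in> B"
  shows "(\<Sum>j\<in>J. tens (f j) (q j)) \<in> tspan A B"
  using assms
proof (induction J rule: finite_induct)
  case empty
  show ?case unfolding tspan_def by (intro CollectI exI[of _ "[]"]) simp
next
  case (insert j J)
  then obtain l where "set l \<subseteq> A \<times> B" "(\<Sum>j\<in>J. tens (f j) (q j)) = sum_list (map (\<lambda>(f,g). tens f g) l)"
    unfolding tspan_def by auto
  with insert show ?case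
    unfolding tspan_def by (intro CollectI exI[of _ "(f j, q j) # l"]) auto
qed

lemma sum_row_tens_monom:
  assumes "inV2 w1 w2 R"
  shows "R = (\<Sum>j\<le>w2. tens (row w1 R j) (monom 1 j))"
proof (rule poly_eqI, rule poly_eqI)
  fix i k
  have "coeff (coeff (\<Sum>j\<le>w2. tens (row w1 R j) (monom 1 j)) i) k
     = (if k \<le> w2 then coeff (row w1 R k) i else 0)"
  proof -
    have ifd: "(a::rat) * (if b then 1 else 0) = (if b then a else 0)" for a b by simp
    show ?thesis by (simp add: coeff_sum coeff_tens ifd sum.delta')
  qed
  also have "\<dots> = coeff (coeff R i) k"
  proof (cases "k \<le> w2")
    case True
    then show ?thesis using assms unfolding inV2_def by (auto simp: coeff_row coeff_eq_0)
  next
    case False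
    have "degree (coeff R i) \<le> w2" using assms unfolding inV2_def by auto
    then show ?thesis using False by (simp add: coeff_eq_0)
  qed
  finally show "coeff (coeff R i) k = coeff (coeff (\<Sum>j\<le>w2. tens (row w1 R j) (monom 1 j)) i) k" ..
qed

text \<open>
  \<open>(A \<otimes> V) \<inter> (V \<otimes> B) = A \<otimes> B\<close>: apply a linear retraction onto \<open>B\<close> in the
  second variable to the expansion of \<open>R\<close> in its rows.
\<close>

lemma tspan_if_rows_and_coeffs:
  assumes "rat_poly.subspace B" "inV2 w1 w2 R" "\<And>j. row w1 R j \<in> A" "\<And>i. coeff R i \<in> B"
  shows "R \<in> tspan A B"
proof -
  obtain \<pi> where \<pi>: "Vector_Spaces.linear smult smult \<pi>" "\<And>x. \<pi> x \<in> B" "\<And>x. x \<in> B \<Longrightarrow> \<pi> x = x"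
    using rat_poly.subspace_linear_retraction[OF assms(1)] by blast
  interpret \<pi>: Vector_Spaces.linear smult smult \<pi> by (fact \<pi>(1))
  have "R = map_poly \<pi> R"
    by (rule poly_eqI) (simp add: coeff_map_poly \<pi>.zero \<pi>(3) assms(4))
  also have "\<dots> = map_poly \<pi> (\<Sum>j\<le>w2. tens (row w1 R j) (monom 1 j))"
    using sum_row_tens_monom[OF assms(2)] by simp
  also have "\<dots> = (\<Sum>j\<le>w2. tens (row w1 R j) (\<pi> (monom 1 j)))"
    by (rule poly_eqI) (simp add: coeff_map_poly coeff_sum coeff_tens \<pi>.zero \<pi>.sum \<pi>.scale)
  also have "\<dots> \<in> tspan A B"
    by (rule sum_tens_in_tspan) (simp_all add: assms(3) \<pi>(2))
  finally show ?thesis .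
qed

lemma DS_act_coeffs_rows_in_W1:
  assumes "even w1" "even w2" "P \<in> W2 w1 w2"
  defines "R \<equiv> zg2_act w1 w2 DS P"
  shows "coeff R i \<in> W1 w2" "row w1 R j \<in> W1 w1"
proof -
  have ivP: "inV2 w1 w2 P" and gens: "zg2_act w1 w2 gen_SS P = 0"
    "zg2_act w1 w2 gen_U_fst P = 0" "zg2_act w1 w2 gen_U_snd P = 0"
    using assms(3) unfolding W2_iff by auto
  have iv: "inV2 w1 w2 R" unfolding R_def by (rule inV2_zg2_act)
  have R: "R = P + act2 w1 w2 (mS,mS) P" unfolding R_def by (simp add: zg2_act_DS ivP)
  have SS: "P + act2 w1 w2 (mI,mS) P + act2 w1 w2 (mS,mI) P + act2 w1 w2 (mS,mS) P = 0"
    using gens(1) by (simp add: zg2_act_gen_SS ivP)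
  have IS: "act2 w1 w2 (mI,mS) R = - R" and SI: "act2 w1 w2 (mS,mI) R = - R"
    using SS unfolding R
    by (simp_all add: act2_add act2_mmul mmul_mS_mS act2_neg_mI_left[OF assms(1)]
        act2_neg_mI_right[OF assms(2)] act2_mI_mI[OF ivP] algebra_simps eq_neg_iff_add_eq_0)
  have UI: "R + act2 w1 w2 (mU,mI) R + act2 w1 w2 (mmul mU mU,mI) R = 0"
    and IU: "R + act2 w1 w2 (mI,mU) R + act2 w1 w2 (mI,mmul mU mU) R = 0"
    using gens(2,3) unfolding zg2_act_gen_U_fst zg2_act_gen_U_snd R_def .
  show "coeff R i \<in> W1 w2"
  proof -
    have "coeff (R + act2 w1 w2 (mI,mU) R + act2 w1 w2 (mI,mmul mU mU) R) i = 0"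
      "coeff (act2 w1 w2 (mI,mS) R) i = coeff (- R) i"
      using IU IS by simp_all
    then show ?thesis
      using iv unfolding W1_iff inV2_def by (simp add: coeff_act2_mI_left[OF iv])
  qed
  show "row w1 R j \<in> W1 w1"
  proof -
    have "row w1 (R + act2 w1 w2 (mU,mI) R + act2 w1 w2 (mmul mU mU,mI) R) j = 0"
      "row w1 (act2 w1 w2 (mS,mI) R) j = row w1 (- R) j"
      using UI SI by simp_all
    then show ?thesis
      unfolding W1_iff by (simp add: row_add row_minus row_act2_mI_right[OF iv] degree_row_le)
  qed
qed

lemma DS_act_in_tspan_W1:
  assumes "even w1" "even w2" "P \<in> W2 w1 w2"
  shows "zg2_act w1 w2 DS P \<in> tspan (W1 w1) (W1 w2)"
  using DS_act_coeffs_rows_in_W1[OF assms]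
  by (intro tspan_if_rows_and_coeffs[OF subspace_W1 inV2_zg2_act])

lemma tspan_line_left:
  assumes "rat_poly.subspace B" "x \<in> tspan {smult c e | c. True} B"
  shows "\<exists>q\<in>B. x = tens e q"
proof -
  obtain l where l: "set l \<subseteq> {smult c e | c. True} \<times> B" "x = sum_list (map (\<lambda>(f,g). tens f g) l)"
    using assms(2) unfolding tspan_def by blast
  have "\<exists>q\<in>B. sum_list (map (\<lambda>(f,g). tens f g) l) = tens e q" using l(1)
  proof (induction l)
    case Nil
    then show ?case using rat_poly.subspace_0[OF assms(1)] by force
  next
    case (Cons a l)
    then obtain c g q where "a = (smult c e, g)" "g \<in> B" "q \<in> B"
      "sum_list (map (\<lambda>(f,g). tens f g) l) = tens e q" by auto
    then show ?case using assms(1)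
      by (intro bexI[of _ "smult c g + q"])
         (auto simp: tens_smult_left tens_add_right rat_poly.subspace_add rat_poly.subspace_scale)
  qed
  then show ?thesis using l(2) by simp
qed

lemma tspan_line_right:
  assumes "rat_poly.subspace A" "x \<in> tspan A {smult c e | c. True}"
  shows "\<exists>p\<in>A. x = tens p e"
proof -
  obtain l where l: "set l \<subseteq> A \<times> {smult c e | c. True}" "x = sum_list (map (\<lambda>(f,g). tens f g) l)"
    using assms(2) unfolding tspan_def by blast
  have "\<exists>p\<in>A. sum_list (map (\<lambda>(f,g). tens f g) l) = tens p e" using l(1)
  proof (induction l)
    case Nil
    then show ?case using rat_poly.subspace_0[OF assms(1)] by force
  next
    case (Cons a l)
    then obtain c f p where "a = (f, smult c e)" "f \<in> A" "p \<in> A"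
      "sum_list (map (\<lambda>(f,g). tens f g) l) = tens p e" by auto
    then show ?case using assms(1)
      by (intro bexI[of _ "smult c f + p"])
         (auto simp: tens_smult_left tens_add_left rat_poly.subspace_add rat_poly.subspace_scale)
  qed
  then show ?thesis using l(2) by simp
qed

lemma Kq_eq:
  "Kq w1 w2 = {tens (1 - monom 1 w1) A + tens B (1 - monom 1 w2) | A B. A \<in> W1 w2 \<and> B \<in> W1 w1}"
proof (intro set_eqI iffI)
  fix x assume "x \<in> Kq w1 w2"
  then obtain y z where x: "x = y + z" and "y \<in> tspan (E1 w1) (W1 w2)" "z \<in> tspan (W1 w1) (E1 w2)"
    unfolding Kq_def by blast
  then obtain A B where "A \<in> W1 w2" "y = tens (1 - monom 1 w1) A" "B \<in> W1 w1" "z = tens B (1 - monom 1 w2)"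
    using tspan_line_left[OF subspace_W1] tspan_line_right[OF subspace_W1] unfolding E1_def by metis
  then show "x \<in> {tens (1 - monom 1 w1) A + tens B (1 - monom 1 w2) | A B. A \<in> W1 w2 \<and> B \<in> W1 w1}"
    using x by blast
next
  fix x assume "x \<in> {tens (1 - monom 1 w1) A + tens B (1 - monom 1 w2) | A B. A \<in> W1 w2 \<and> B \<in> W1 w1}"
  moreover have "1 - monom 1 w \<in> E1 w" for w
    unfolding E1_def by (intro CollectI exI[of _ 1]) simp
  ultimately show "x \<in> Kq w1 w2"
    unfolding Kq_def by (blast intro: tens_in_tspan)
qed

lemma zg2_act_DS_E2_summands:
  assumes "even w1" "even w2" "B \<in> W1 w1" "A \<in> W1 w2"
  shows "zg2_act w1 w2 DS (tens B 1 - tens (monom 1 w1) A)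
    = tens (1 - monom 1 w1) A + tens B (1 - monom 1 w2)"
  unfolding zg2_act_diff zg2_act_DS_tens_one[OF assms(2,3)] zg2_act_DS_tens_X_power[OF assms(1,4)]
  by simp

lemma kernel_DS_subset_E2:
  assumes "even w1" "even w2" "P \<in> W2 w1 w2" "zg2_act w1 w2 DS P \<in> Kq w1 w2"
  shows "P \<in> E2 w1 w2"
proof -
  obtain A B where AB: "A \<in> W1 w2" "B \<in> W1 w1"
    "zg2_act w1 w2 DS P = tens (1 - monom 1 w1) A + tens B (1 - monom 1 w2)"
    using assms(4) unfolding Kq_eq by blast
  define Q where "Q = P - (tens B 1 - tens (monom 1 w1) A)"
  have "Q \<in> W2 w1 w2"
    unfolding Q_def using assms AB by (intro W2_diff tens_one_in_W2 tens_X_power_in_W2) auto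
  moreover have "zg2_act w1 w2 DS Q = 0"
    using zg2_act_diff[of w1 w2 DS P] zg2_act_DS_E2_summands[OF assms(1,2) AB(2,1)] AB(3)
    unfolding Q_def by simp
  ultimately have "Q \<in> VID w1 w2" by (simp add: VID_eq_W2_kernel_DS[OF assms(2)])
  moreover have "P = map_poly (\<lambda>c. [:c:]) B + Q + monom (- A) w1"
    unfolding map_poly_const_eq_tens_one monom_eq_tens Q_def by (simp add: tens_minus_right)
  moreover have "- A \<in> W1 w2" using AB(1) subspace_W1 rat_poly.subspace_neg by blast
  ultimately show ?thesis unfolding E2_def using AB(2) by blast
qed

lemma E2_subset_kernel_DS:
  assumes "even w1" "even w2" "P \<in> E2 w1 w2"
  shows "zg2_act w1 w2 DS P \<in> Kq w1 w2"
proof -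
  obtain B Q R where P: "P = tens B 1 + Q + tens (monom 1 w1) R"
    and BQR: "B \<in> W1 w1" "Q \<in> VID w1 w2" "R \<in> W1 w2"
    using assms(3) unfolding E2_def map_poly_const_eq_tens_one monom_eq_tens by blast
  have "zg2_act w1 w2 DS Q = 0" using BQR(2) unfolding VID_def by auto
  then have "zg2_act w1 w2 DS P = tens (1 - monom 1 w1) (- R) + tens B (1 - monom 1 w2)"
    unfolding P zg2_act_add zg2_act_DS_tens_one[OF assms(2) BQR(1)]
      zg2_act_DS_tens_X_power[OF assms(1) BQR(3)]
    by (simp add: tens_minus_right)
  moreover have "- R \<in> W1 w2" using BQR(3) subspace_W1 rat_poly.subspace_neg by blast
  ultimately show ?thesis unfolding Kq_eq using BQR(1) by blast
qed

theorem mainTheorem6: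
  fixes w1 w2 :: nat
  assumes "even w1" "even w2" "w1 \<ge> 2" "w2 \<ge> 2"
  shows "E2 w1 w2 \<subseteq> W2 w1 w2 \<and>
    (\<forall>P\<in>W2 w1 w2. zg2_act w1 w2 DS P \<in> tspan (W1 w1) (W1 w2)) \<and>
    {P \<in> W2 w1 w2. zg2_act w1 w2 DS P \<in> Kq w1 w2} = E2 w1 w2"
  using E2_subset_W2[OF assms(1,2)] DS_act_in_tspan_W1[OF assms(1,2)]
    kernel_DS_subset_E2[OF assms(1,2)] E2_subset_kernel_DS[OF assms(1,2)]
  by blast

end
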